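(* Let $U:\mathbb{R}\to\mathbb{R}$ be smooth and skew periodic, $U(x)=\tilde U(x)-\bar b x$ with $\tilde U$ smooth $1$-periodic, and assume the critical points of $U$ in one period are exactly $k\ge1$ local minima $x_1,\dots,x_k$ interleaved with $k$ local maxima $x_{1/2},\dots,x_{k+1/2}$, $0=x_{1/2}<x_1<x_{3/2}<\dots<x_k<x_{k+1/2}=1$, with $x_{i+\ell k}=x_i+\ell$ for $\ell\in\mathbb{Z}$. Define $$W_i:=\min_{j=1,\dots,k}\big(\tilde h_R(x_i;x_{j+1})+\tilde h_L(x_i;x_j)\big),\qquad i=1,\dots,k.$$ Then $(W_1,\dots,W_k)$ solves the discrete weak KAM problem $$W_i=\min_{j=1,\dots,k}\{W_j+h(x_i;x_j)\}\qquad\text{for all } i=1,\dots,k,$$ where $h$ is the Peierls barrier.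
   Context: Let $L(s,x)=\frac14(s+U'(x))^2$ (with $U'$ $1$-periodic). Peierls barrier on $\mathbb{S}^1=\mathbb{R}/\mathbb{Z}$: $h(y;x)=\liminf_{T\to\infty}\inf\{\int_0^TL(\dot\gamma,\gamma)dt:\gamma:[0,T]\to\mathbb{S}^1\text{ absolutely continuous},\gamma(0)=x,\gamma(T)=y\}$. Right barrier: for $y\in[x_i,x_{i+k}]\subset\mathbb{R}$, $h_R(y;x_i)=\inf\{\int_0^TL(\dot\gamma,\gamma)dt: T\ge0,\ \gamma:[0,T]\to\mathbb{R}\text{ absolutely continuous},\gamma(0)=x_i,\gamma(T)=y\}$; left barrier: for $y\in[x_{i-k},x_i]$, $h_L(y;x_i)$ is defined by the same formula. (Explicitly, $h_R(y;x_i)$ is the sum over the wells crossed of the uphill increments $U(x_{j+1/2})-U(x_j)$, with $\max_{z\in[x_m,y]}U(z)-U(x_m)$ for the last partial well $[x_m,y]$; analogously for $h_L$.) For $i,j\in\{1,\dots,k\}$ (indices of $x_{j+1}$ understood with $x_{k+1}=x_1+1$): $\tilde h_R(x_i;x_{j+1})=h_R(x_i;x_{j+1})$ if $j<i$ and $=h_R(x_{i+k};x_{j+1})$ if $j\ge i$; $\tilde h_L(x_i;x_j)=h_L(x_i;x_j)$ if $j\ge i$ and $=h_L(x_{i-k};x_j)$ if $j<i$. These are the costs of the counterclockwise path from $x_{j+1}$ to $x_i$ and the clockwise path from $x_j$ to $x_i$. *)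

theory Defs
  imports "HOL-Analysis.Analysis"
begin

definition smooth_real :: "(real \<Rightarrow> real) \<Rightarrow> bool" where
  "smooth_real f \<longleftrightarrow> (\<forall>n x. ((deriv ^^ n) f) differentiable (at x))"

definition abs_cont_on :: "real set \<Rightarrow> (real \<Rightarrow> real) \<Rightarrow> bool" where
  "abs_cont_on S f \<longleftrightarrow>
     (\<forall>\<epsilon>>0. \<exists>\<delta>>0. \<forall>(n::nat) (a::nat \<Rightarrow> real) b.
        (\<forall>i<n. a i \<le> b i \<and> {a i..b i} \<subseteq> S) \<longrightarrow>
        (\<forall>i<n. \<forall>j<n. i \<noteq> j \<longrightarrow> {a i<..<b i} \<inter> {a j<..<b j} = {}) \<longrightarrow>
        (\<Sum>i<n. b i - a i) < \<delta> \<longrightarrow> (\<Sum>i<n. \<bar>f (b i) - f (a i)\<bar>) < \<epsilon>)"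

definition lagr :: "(real \<Rightarrow> real) \<Rightarrow> real \<Rightarrow> real \<Rightarrow> real" where
  "lagr U s x = (s + deriv U x)\<^sup>2 / 4"

(* action of gamma on [0,T]; the derivative of an AC curve exists a.e. *)
definition action :: "(real \<Rightarrow> real) \<Rightarrow> real \<Rightarrow> (real \<Rightarrow> real) \<Rightarrow> real" where
  "action U T \<gamma> = integral {0..T} (\<lambda>t. lagr U (deriv \<gamma> t) (\<gamma> t))"

(* admissible curves: absolutely continuous on [0,T] with finite action
   (curves with non-integrable, i.e. infinite, action do not affect the infimum) *)
definition admissible :: "(real \<Rightarrow> real) \<Rightarrow> real \<Rightarrow> (real \<Rightarrow> real) \<Rightarrow> bool" where
  "admissible U T \<gamma> \<longleftrightarrow> 0 \<le> T \<and> abs_cont_on {0..T} \<gamma> \<and>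
     (\<lambda>t. lagr U (deriv \<gamma> t) (\<gamma> t)) integrable_on {0..T}"

(* h_R(y;x) = h_L(y;x) on R: infimum of the action over all T >= 0 and curves from x to y *)
definition barrier :: "(real \<Rightarrow> real) \<Rightarrow> real \<Rightarrow> real \<Rightarrow> real" where
  "barrier U x y = Inf {action U T \<gamma> | T \<gamma>. admissible U T \<gamma> \<and> \<gamma> 0 = x \<and> \<gamma> T = y}"

(* Peierls barrier h(y;x) on S^1 = R/Z, via lifts to R: a curve on S^1 from [x] to [y]
   lifts to a curve on R from x to y + m for some integer m (L is 1-periodic in x) *)
definition peierls :: "(real \<Rightarrow> real) \<Rightarrow> real \<Rightarrow> real \<Rightarrow> ereal" where
  "peierls U x y = Liminf at_top (\<lambda>T. ereal (Inf {action U T \<gamma> | \<gamma>.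
       admissible U T \<gamma> \<and> \<gamma> 0 = x \<and> (\<exists>m::int. \<gamma> T = y + of_int m)}))"

definition tilde_hR :: "(real \<Rightarrow> real) \<Rightarrow> (int \<Rightarrow> real) \<Rightarrow> int \<Rightarrow> int \<Rightarrow> int \<Rightarrow> real" where
  "tilde_hR U xm k i j = (if j < i then barrier U (xm (j + 1)) (xm i)
                          else barrier U (xm (j + 1)) (xm (i + k)))"

definition tilde_hL :: "(real \<Rightarrow> real) \<Rightarrow> (int \<Rightarrow> real) \<Rightarrow> int \<Rightarrow> int \<Rightarrow> int \<Rightarrow> real" where
  "tilde_hL U xm k i j = (if i \<le> j then barrier U (xm j) (xm i)
                          else barrier U (xm j) (xm (i - k)))"

definition Wval :: "(real \<Rightarrow> real) \<Rightarrow> (int \<Rightarrow> real) \<Rightarrow> int \<Rightarrow> int \<Rightarrow> real" where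
  "Wval U xm k i = Min ((\<lambda>j. tilde_hR U xm k i j + tilde_hL U xm k i j) ` {1..k})"

end

theory Submission
  imports Defs "HOL-Library.Periodic_Fun"
begin

(* Write B a c for the barrier on the line from x_a to x_c.  Every curve from x_a to x_c passes
   through each point in between, so B is additive along monotone chains of indices; it is also
   nonnegative and invariant under the shift of both indices by k.  W_i is the least total cost
   of reaching x_i from both ends of the circle cut open between consecutive minima x_d, x_(d+1).
   Keeping the optimal cut for x_j and clamping it into the admissible range for x_i shows
   W_i <= W_j + B j (i + m k) for all j and m.  Since a curve on the circle lifts to a curve on the
   line ending at some x_i + m, this gives W_i <= W_j + h(x_i; x_j); and h(x_i; x_i) <= 0 because
   resting at the critical point x_i costs nothing. *)

definition nonoverlapping_intervals :: "real set \<Rightarrow> nat \<Rightarrow> (nat \<Rightarrow> real) \<Rightarrow> (nat \<Rightarrow> real) \<Rightarrow> bool" where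
  "nonoverlapping_intervals S n a b \<longleftrightarrow>
     (\<forall>i<n. a i \<le> b i \<and> {a i..b i} \<subseteq> S) \<and>
     (\<forall>i<n. \<forall>j<n. i \<noteq> j \<longrightarrow> {a i<..<b i} \<inter> {a j<..<b j} = {})"

lemma nonoverlapping_intervalsD:
  assumes "nonoverlapping_intervals S n a b" "i < n"
  shows "a i \<le> b i" "a i \<in> S" "b i \<in> S"
proof -
  from assms have "a i \<le> b i" "{a i..b i} \<subseteq> S"
    unfolding nonoverlapping_intervals_def by blast+
  then show "a i \<le> b i" "a i \<in> S" "b i \<in> S" by auto
qed

lemma abs_cont_on_iff:
  "abs_cont_on S f \<longleftrightarrow>
     (\<forall>e>0. \<exists>\<delta>>0. \<forall>n a b. nonoverlapping_intervals S n a b \<longrightarrow> (\<Sum>i<n. b i - a i) < \<delta> \<longrightarrow>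
        (\<Sum>i<n. \<bar>f (b i) - f (a i)\<bar>) < e)"
  unfolding abs_cont_on_def nonoverlapping_intervals_def imp_conjL ..

lemma abs_cont_onE:
  assumes "abs_cont_on S f" "e > 0"
  obtains \<delta> where "\<delta> > 0"
    "\<And>n a b. nonoverlapping_intervals S n a b \<Longrightarrow> (\<Sum>i<n. b i - a i) < \<delta> \<Longrightarrow>
       (\<Sum>i<n. \<bar>f (b i) - f (a i)\<bar>) < e"
  using assms that unfolding abs_cont_on_iff by metis

lemma abs_cont_on_compose_contraction:
  assumes f: "abs_cont_on {c..d} f" and "mono \<phi>"
    and contraction: "\<And>x y. x \<le> y \<Longrightarrow> \<phi> y - \<phi> x \<le> y - x"
    and maps_to: "\<phi> ` S \<subseteq> {c..d}"
  shows "abs_cont_on S (f \<circ> \<phi>)"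
  unfolding abs_cont_on_iff
proof (intro allI impI)
  fix e :: real assume "e > 0"
  then obtain \<delta> where "\<delta> > 0" and \<delta>: "\<And>n a b. nonoverlapping_intervals {c..d} n a b \<Longrightarrow>
      (\<Sum>i<n. b i - a i) < \<delta> \<Longrightarrow> (\<Sum>i<n. \<bar>f (b i) - f (a i)\<bar>) < e"
    using abs_cont_onE[OF f] by blast
  have "(\<Sum>i<n. \<bar>f (\<phi> (b i)) - f (\<phi> (a i))\<bar>) < e"
    if fam: "nonoverlapping_intervals S n a b" and len: "(\<Sum>i<n. b i - a i) < \<delta>" for n a b
  proof (rule \<delta>)
    have "\<phi> (a i) \<in> {c..d}" "\<phi> (b i) \<in> {c..d}" if "i < n" for i
      using nonoverlapping_intervalsD[OF fam that] maps_to by auto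
    then show "nonoverlapping_intervals {c..d} n (\<lambda>i. \<phi> (a i)) (\<lambda>i. \<phi> (b i))"
      using fam \<open>mono \<phi>\<close> unfolding nonoverlapping_intervals_def
      by (auto simp: mono_def min_of_mono[OF \<open>mono \<phi>\<close>] max_of_mono[OF \<open>mono \<phi>\<close>])
    have "(\<Sum>i<n. \<phi> (b i) - \<phi> (a i)) \<le> (\<Sum>i<n. b i - a i)"
      using fam contraction unfolding nonoverlapping_intervals_def by (auto intro: sum_mono)
    with len show "(\<Sum>i<n. \<phi> (b i) - \<phi> (a i)) < \<delta>" by linarith
  qed
  with \<open>\<delta> > 0\<close> show "\<exists>\<delta>>0. \<forall>n a b. nonoverlapping_intervals S n a b \<longrightarrow> (\<Sum>i<n. b i - a i) < \<delta> \<longrightarrow>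
      (\<Sum>i<n. \<bar>(f \<circ> \<phi>) (b i) - (f \<circ> \<phi>) (a i)\<bar>) < e"
    by auto
qed

lemma abs_cont_on_subset:
  "abs_cont_on {c..d} f \<Longrightarrow> S \<subseteq> {c..d} \<Longrightarrow> abs_cont_on S f"
  using abs_cont_on_compose_contraction[of c d f id S] by (simp add: mono_def)

lemma abs_cont_on_shift:
  "abs_cont_on {c..d} f \<Longrightarrow> (\<lambda>t. h + t) ` S \<subseteq> {c..d} \<Longrightarrow> abs_cont_on S (\<lambda>t. f (h + t))"
  using abs_cont_on_compose_contraction[of c d f "\<lambda>t. h + t" S] by (simp add: mono_def o_def)

lemma abs_cont_on_transform:
  assumes f: "abs_cont_on S f" and eq: "\<And>x. x \<in> S \<Longrightarrow> f x = g x"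
  shows "abs_cont_on S g"
proof -
  have same_sums: "(\<Sum>i<n. \<bar>g (b i) - g (a i)\<bar>) = (\<Sum>i<n. \<bar>f (b i) - f (a i)\<bar>)"
    if "nonoverlapping_intervals S n a b" for n a b
    using nonoverlapping_intervalsD[OF that] eq by (intro sum.cong) auto
  from f show ?thesis
    unfolding abs_cont_on_iff by (simp add: same_sums)
qed

lemma abs_cont_on_add_const: "abs_cont_on S f \<Longrightarrow> abs_cont_on S (\<lambda>t. f t + c)"
  unfolding abs_cont_on_def by simp

lemma lipschitz_on_imp_abs_cont_on:
  assumes "L-lipschitz_on S f"
  shows "abs_cont_on S f"
  unfolding abs_cont_on_iff
proof (intro allI impI)
  fix e :: real assume "e > 0"
  have "L \<ge> 0" using assms by (rule lipschitz_on_nonneg)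
  show "\<exists>\<delta>>0. \<forall>n a b. nonoverlapping_intervals S n a b \<longrightarrow> (\<Sum>i<n. b i - a i) < \<delta> \<longrightarrow>
      (\<Sum>i<n. \<bar>f (b i) - f (a i)\<bar>) < e"
  proof (intro exI[of _ "e / (L + 1)"] conjI allI impI)
    show "e / (L + 1) > 0" using \<open>e > 0\<close> \<open>L \<ge> 0\<close> by simp
    fix n a b assume fam: "nonoverlapping_intervals S n a b" and len: "(\<Sum>i<n. b i - a i) < e / (L + 1)"
    have "(\<Sum>i<n. \<bar>f (b i) - f (a i)\<bar>) \<le> (\<Sum>i<n. L * (b i - a i))"
      using nonoverlapping_intervalsD[OF fam] lipschitz_onD[OF assms]
      by (intro sum_mono) (fastforce simp: dist_real_def)
    also have "\<dots> = L * (\<Sum>i<n. b i - a i)" by (simp add: sum_distrib_left)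
    also have "\<dots> \<le> L * (e / (L + 1))" using len \<open>L \<ge> 0\<close> by (intro mult_left_mono) auto
    also have "\<dots> < e" using \<open>e > 0\<close> \<open>L \<ge> 0\<close> by (simp add: field_simps)
    finally show "(\<Sum>i<n. \<bar>f (b i) - f (a i)\<bar>) < e" .
  qed
qed

lemma abs_cont_on_imp_continuous_on:
  assumes "abs_cont_on {a..b} f"
  shows "continuous_on {a..b} f"
  unfolding continuous_on_iff
proof (intro ballI allI impI)
  fix x e assume x: "x \<in> {a..b}" and "(e::real) > 0"
  then obtain \<delta> where "\<delta> > 0" and \<delta>: "\<And>n a' b'. nonoverlapping_intervals {a..b} n a' b' \<Longrightarrow>
      (\<Sum>i<n. b' i - a' i) < \<delta> \<Longrightarrow> (\<Sum>i<n. \<bar>f (b' i) - f (a' i)\<bar>) < e"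
    using abs_cont_onE[OF assms] by blast
  have "dist (f y) (f x) < e" if y: "y \<in> {a..b}" and "dist y x < \<delta>" for y
  proof -
    have "\<bar>f (max x y) - f (min x y)\<bar> < e"
      using \<delta>[of "Suc 0" "\<lambda>_. min x y" "\<lambda>_. max x y"] x y \<open>dist y x < \<delta>\<close>
      by (auto simp: nonoverlapping_intervals_def dist_real_def)
    moreover have "dist (f y) (f x) = \<bar>f (max x y) - f (min x y)\<bar>"
      by (cases x y rule: linorder_cases) (simp_all add: dist_real_def dist_commute)
    ultimately show ?thesis by simp
  qed
  with \<open>\<delta> > 0\<close> show "\<exists>\<delta>>0. \<forall>y\<in>{a..b}. dist y x < \<delta> \<longrightarrow> dist (f y) (f x) < e" by blast
qed

lemma abs_cont_on_Icc_Un: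
  assumes left: "abs_cont_on {a..m} f" and right: "abs_cont_on {m..b} f" and "a \<le> m" "m \<le> b"
  shows "abs_cont_on {a..b} f"
  unfolding abs_cont_on_iff
proof (intro allI impI)
  fix e :: real assume "e > 0"
  have lower: "abs_cont_on {a..b} (f \<circ> (\<lambda>t. min t m))"
    by (rule abs_cont_on_compose_contraction[OF left]) (use \<open>a \<le> m\<close> in \<open>auto simp: mono_def\<close>)
  obtain \<delta>1 where "\<delta>1 > 0" and \<delta>1: "\<And>n a' b'. nonoverlapping_intervals {a..b} n a' b' \<Longrightarrow>
      (\<Sum>i<n. b' i - a' i) < \<delta>1 \<Longrightarrow> (\<Sum>i<n. \<bar>f (min (b' i) m) - f (min (a' i) m)\<bar>) < e / 2"
    using abs_cont_onE[OF lower[unfolded o_def] half_gt_zero[OF \<open>e > 0\<close>]] by blast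
  have upper: "abs_cont_on {a..b} (f \<circ> (\<lambda>t. max t m))"
    by (rule abs_cont_on_compose_contraction[OF right]) (use \<open>m \<le> b\<close> in \<open>auto simp: mono_def\<close>)
  obtain \<delta>2 where "\<delta>2 > 0" and \<delta>2: "\<And>n a' b'. nonoverlapping_intervals {a..b} n a' b' \<Longrightarrow>
      (\<Sum>i<n. b' i - a' i) < \<delta>2 \<Longrightarrow> (\<Sum>i<n. \<bar>f (max (b' i) m) - f (max (a' i) m)\<bar>) < e / 2"
    using abs_cont_onE[OF upper[unfolded o_def] half_gt_zero[OF \<open>e > 0\<close>]] by blast
  have split: "\<bar>f y - f x\<bar> \<le> \<bar>f (min y m) - f (min x m)\<bar> + \<bar>f (max y m) - f (max x m)\<bar>"
    if "x \<le> y" for x y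
  proof -
    have "f y - f x = (f (min y m) - f (min x m)) + (f (max y m) - f (max x m))"
      using \<open>x \<le> y\<close> by (auto simp: min_def max_def)
    then show ?thesis by linarith
  qed
  show "\<exists>\<delta>>0. \<forall>n a' b'. nonoverlapping_intervals {a..b} n a' b' \<longrightarrow> (\<Sum>i<n. b' i - a' i) < \<delta> \<longrightarrow>
      (\<Sum>i<n. \<bar>f (b' i) - f (a' i)\<bar>) < e"
  proof (intro exI[of _ "min \<delta>1 \<delta>2"] conjI allI impI)
    show "min \<delta>1 \<delta>2 > 0" using \<open>\<delta>1 > 0\<close> \<open>\<delta>2 > 0\<close> by simp
    fix n a' b' assume fam: "nonoverlapping_intervals {a..b} n a' b'"
      and len: "(\<Sum>i<n. b' i - a' i) < min \<delta>1 \<delta>2"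
    have "(\<Sum>i<n. \<bar>f (b' i) - f (a' i)\<bar>) \<le>
        (\<Sum>i<n. \<bar>f (min (b' i) m) - f (min (a' i) m)\<bar>) + (\<Sum>i<n. \<bar>f (max (b' i) m) - f (max (a' i) m)\<bar>)"
      unfolding sum.distrib[symmetric]
      using nonoverlapping_intervalsD(1)[OF fam] by (intro sum_mono split) simp
    also have "\<dots> < e / 2 + e / 2"
      using len by (intro add_strict_mono \<delta>1[OF fam] \<delta>2[OF fam]) simp_all
    finally show "(\<Sum>i<n. \<bar>f (b' i) - f (a' i)\<bar>) < e" by simp
  qed
qed

lemma abs_cont_on_concat:
  assumes g1: "abs_cont_on {0..T1} g1" and g2: "abs_cont_on {0..T2} g2"
    and join: "g1 T1 = g2 0" and "0 \<le> T1" "0 \<le> T2"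
  shows "abs_cont_on {0..T1 + T2} (\<lambda>t. if t \<le> T1 then g1 t else g2 (t - T1))"
proof (rule abs_cont_on_Icc_Un)
  show "abs_cont_on {0..T1} (\<lambda>t. if t \<le> T1 then g1 t else g2 (t - T1))"
    using g1 by (rule abs_cont_on_transform) auto
  have "abs_cont_on {T1..T1 + T2} (\<lambda>t. g2 (- T1 + t))"
    by (rule abs_cont_on_shift[OF g2]) auto
  then show "abs_cont_on {T1..T1 + T2} (\<lambda>t. if t \<le> T1 then g1 t else g2 (t - T1))"
    by (rule abs_cont_on_transform) (auto simp: join)
qed (use assms in auto)

lemma deriv_shift: "deriv (\<lambda>t. f (h + t)) x = deriv f (h + x)"
  using DERIV_shift[of f _ x h] by (simp add: deriv_def add.commute)

lemma deriv_add_const: "deriv (\<lambda>t. f t + c) x = deriv f (x :: real)"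
  by (simp add: deriv_def has_real_derivative_iff_has_vector_derivative has_vector_derivative_add_const)

lemma lagr_nonneg: "0 \<le> lagr U s x"
  by (simp add: lagr_def)

lemma action_nonneg: "admissible U T \<gamma> \<Longrightarrow> 0 \<le> action U T \<gamma>"
  unfolding action_def admissible_def by (auto intro!: integral_nonneg lagr_nonneg)

lemma action_linear: "action U T (\<lambda>t. p + s * t) = integral {0..T} (\<lambda>t. lagr U s (p + s * t))"
proof -
  have "deriv (\<lambda>t. p + s * t) t = s" for t
    by (rule DERIV_imp_deriv) (auto intro!: derivative_eq_intros)
  then show ?thesis unfolding action_def by simp
qed

lemma admissible_add_const:
  assumes "\<And>x. deriv U (x + c) = deriv U x"
  shows "admissible U T (\<lambda>t. \<gamma> t + c) \<longleftrightarrow> admissible U T \<gamma>"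
    and "action U T (\<lambda>t. \<gamma> t + c) = action U T \<gamma>"
proof -
  have same_lagr: "lagr U (deriv (\<lambda>t. \<gamma> t + c) t) (\<gamma> t + c) = lagr U (deriv \<gamma> t) (\<gamma> t)" for t
    by (simp add: lagr_def deriv_add_const assms)
  have "abs_cont_on {0..T} (\<lambda>t. \<gamma> t + c) \<longleftrightarrow> abs_cont_on {0..T} \<gamma>"
    using abs_cont_on_add_const[of "{0..T}" \<gamma> c] abs_cont_on_add_const[of "{0..T}" "\<lambda>t. \<gamma> t + c" "- c"]
    by auto
  then show "admissible U T (\<lambda>t. \<gamma> t + c) \<longleftrightarrow> admissible U T \<gamma>"
    unfolding admissible_def same_lagr by simp
  show "action U T (\<lambda>t. \<gamma> t + c) = action U T \<gamma>"
    unfolding action_def same_lagr ..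
qed

lemma admissible_split:
  assumes adm: "admissible U T \<gamma>" and "0 \<le> t0" "t0 \<le> T"
  shows "admissible U t0 \<gamma>" and "admissible U (T - t0) (\<lambda>t. \<gamma> (t0 + t))"
    and "action U T \<gamma> = action U t0 \<gamma> + action U (T - t0) (\<lambda>t. \<gamma> (t0 + t))"
proof -
  define L where "L t = lagr U (deriv \<gamma> t) (\<gamma> t)" for t
  have ac: "abs_cont_on {0..T} \<gamma>" and int: "L integrable_on {0..T}"
    using adm unfolding admissible_def L_def by auto
  have L_shift: "lagr U (deriv (\<lambda>t. \<gamma> (t0 + t)) t) (\<gamma> (t0 + t)) = L (t0 + t)" for t
    by (simp add: L_def deriv_shift)
  have "(L has_integral integral {t0..T} L) {t0..T}"
    using integrable_subinterval_real[OF int] \<open>0 \<le> t0\<close> by (simp add: integrable_integral)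
  then have tail: "((\<lambda>t. lagr U (deriv (\<lambda>t. \<gamma> (t0 + t)) t) (\<gamma> (t0 + t)))
      has_integral integral {t0..T} L) {0..T - t0}"
    unfolding L_shift using has_integral_shift_Icc_real[of L t0 _ 0 "T - t0"] by (simp add: o_def)
  show "admissible U t0 \<gamma>"
    using ac int \<open>0 \<le> t0\<close> \<open>t0 \<le> T\<close> unfolding admissible_def L_def
    by (auto intro: abs_cont_on_subset integrable_subinterval_real)
  show "admissible U (T - t0) (\<lambda>t. \<gamma> (t0 + t))"
    using tail \<open>0 \<le> t0\<close> \<open>t0 \<le> T\<close> unfolding admissible_def
    by (auto intro!: abs_cont_on_shift[OF ac] simp: integrable_on_def)
  have "action U T \<gamma> = integral {0..t0} L + integral {t0..T} L"
    unfolding action_def L_def[symmetric]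
    using Henstock_Kurzweil_Integration.integral_combine[OF \<open>0 \<le> t0\<close> \<open>t0 \<le> T\<close> int] by simp
  then show "action U T \<gamma> = action U t0 \<gamma> + action U (T - t0) (\<lambda>t. \<gamma> (t0 + t))"
    using integral_unique[OF tail] unfolding action_def L_def by simp
qed

lemma admissible_concat:
  assumes adm1: "admissible U T1 g1" and adm2: "admissible U T2 g2" and join: "g1 T1 = g2 0"
  defines "\<gamma> \<equiv> \<lambda>t. if t \<le> T1 then g1 t else g2 (t - T1)"
  shows "admissible U (T1 + T2) \<gamma>" and "action U (T1 + T2) \<gamma> = action U T1 g1 + action U T2 g2"
    and "\<gamma> 0 = g1 0" and "\<gamma> (T1 + T2) = g2 T2"
proof -
  have "0 \<le> T1" "0 \<le> T2" using adm1 adm2 unfolding admissible_def by auto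
  then show "\<gamma> 0 = g1 0" "\<gamma> (T1 + T2) = g2 T2"
    using join by (auto simp: \<gamma>_def)
  define L where "L t = lagr U (deriv \<gamma> t) (\<gamma> t)" for t
  have L_left: "L t = lagr U (deriv g1 t) (g1 t)" if "t < T1" for t
  proof -
    have "eventually (\<lambda>s. \<gamma> s = g1 s) (nhds t)"
      using eventually_nhds_in_open[of "{..<T1}" t] that by (auto elim!: eventually_mono simp: \<gamma>_def)
    then show ?thesis
      using that by (simp add: L_def \<gamma>_def deriv_cong_ev)
  qed
  have L_right: "L t = lagr U (deriv g2 (- T1 + t)) (g2 (- T1 + t))" if "T1 < t" for t
  proof -
    have "eventually (\<lambda>s. \<gamma> s = g2 (- T1 + s)) (nhds t)"
      using eventually_nhds_in_open[of "{T1<..}" t] that by (auto elim!: eventually_mono simp: \<gamma>_def)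
    then have "deriv \<gamma> t = deriv (\<lambda>s. g2 (- T1 + s)) t"
      by (rule deriv_cong_ev) simp
    also have "\<dots> = deriv g2 (- T1 + t)"
      by (rule deriv_shift)
    finally show ?thesis
      using that by (simp add: L_def \<gamma>_def)
  qed
  have "(L has_integral action U T1 g1) {0..T1}"
  proof (rule has_integral_spike_finite[of "{T1}"])
    show "((\<lambda>t. lagr U (deriv g1 t) (g1 t)) has_integral action U T1 g1) {0..T1}"
      using adm1 unfolding admissible_def action_def by (simp add: integrable_integral)
  qed (use L_left in auto)
  moreover have "(L has_integral action U T2 g2) {T1..T1 + T2}"
  proof (rule has_integral_spike_finite[of "{T1}"])
    have "((\<lambda>t. lagr U (deriv g2 t) (g2 t)) has_integral action U T2 g2) {0..T2}"
      using adm2 unfolding admissible_def action_def by (simp add: integrable_integral)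
    then show "((\<lambda>t. lagr U (deriv g2 (- T1 + t)) (g2 (- T1 + t))) has_integral action U T2 g2) {T1..T1 + T2}"
      using has_integral_shift_Icc_real[of "\<lambda>t. lagr U (deriv g2 (- T1 + t)) (g2 (- T1 + t))" T1 _ 0 T2]
      by (simp add: o_def add.commute)
  qed (use L_right in auto)
  ultimately have "(L has_integral action U T1 g1 + action U T2 g2) {0..T1 + T2}"
    using \<open>0 \<le> T1\<close> \<open>0 \<le> T2\<close> by (intro has_integral_combine) auto
  moreover have "abs_cont_on {0..T1 + T2} \<gamma>"
    unfolding \<gamma>_def using adm1 adm2 join \<open>0 \<le> T1\<close> \<open>0 \<le> T2\<close>
    by (intro abs_cont_on_concat) (auto simp: admissible_def)
  ultimately show "admissible U (T1 + T2) \<gamma>" "action U (T1 + T2) \<gamma> = action U T1 g1 + action U T2 g2"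
    using \<open>0 \<le> T1\<close> \<open>0 \<le> T2\<close> unfolding admissible_def action_def L_def
    by (auto simp: integrable_on_def integral_unique)
qed

lemma barrier_le_action:
  assumes "admissible U T \<gamma>" "\<gamma> 0 = x" "\<gamma> T = y"
  shows "barrier U x y \<le> action U T \<gamma>"
  unfolding barrier_def
proof (rule cInf_lower)
  show "action U T \<gamma> \<in> {action U T \<gamma> | T \<gamma>. admissible U T \<gamma> \<and> \<gamma> 0 = x \<and> \<gamma> T = y}"
    using assms by blast
  show "bdd_below {action U T \<gamma> | T \<gamma>. admissible U T \<gamma> \<and> \<gamma> 0 = x \<and> \<gamma> T = y}"
    by (rule bdd_belowI[of _ 0]) (auto intro: action_nonneg)
qed

context
  fixes U :: "real \<Rightarrow> real"
  assumes deriv_continuous: "continuous_on UNIV (deriv U)"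
begin

lemma admissible_linear:
  assumes "0 \<le> T"
  shows "admissible U T (\<lambda>t. p + s * t)"
proof -
  have "deriv (\<lambda>t. p + s * t) t = s" for t
    by (rule DERIV_imp_deriv) (auto intro!: derivative_eq_intros)
  moreover have "continuous_on {0..T} (\<lambda>t. lagr U s (p + s * t))"
    unfolding lagr_def by (intro continuous_intros continuous_on_compose2[OF deriv_continuous]) auto
  moreover have "\<bar>s\<bar>-lipschitz_on {0..T} (\<lambda>t. p + s * t)"
    by (auto simp: lipschitz_on_def dist_real_def abs_mult right_diff_distrib[symmetric])
  ultimately show ?thesis
    unfolding admissible_def using \<open>0 \<le> T\<close>
    by (auto intro: lipschitz_on_imp_abs_cont_on integrable_continuous_real)
qed

lemma barrier_greatest:
  assumes "\<And>T \<gamma>. admissible U T \<gamma> \<Longrightarrow> \<gamma> 0 = x \<Longrightarrow> \<gamma> T = y \<Longrightarrow> c \<le> action U T \<gamma>"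
  shows "c \<le> barrier U x y"
  unfolding barrier_def
proof (rule cInf_greatest)
  have "admissible U 1 (\<lambda>t. x + (y - x) * t)" by (rule admissible_linear) simp
  then show "{action U T \<gamma> | T \<gamma>. admissible U T \<gamma> \<and> \<gamma> 0 = x \<and> \<gamma> T = y} \<noteq> {}"
    by fastforce
qed (use assms in blast)

lemma barrier_nonneg: "0 \<le> barrier U x y"
  by (rule barrier_greatest) (rule action_nonneg)

lemma barrier_triangle: "barrier U x z \<le> barrier U x y + barrier U y z"
proof -
  have "barrier U x z - action U T2 g2 \<le> barrier U x y"
    if adm2: "admissible U T2 g2" "g2 0 = y" "g2 T2 = z" for T2 g2
  proof (rule barrier_greatest)
    fix T1 g1 assume adm1: "admissible U T1 g1" "g1 0 = x" "g1 T1 = y"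
    note concat = admissible_concat[OF adm1(1) adm2(1)]
    have "barrier U x z \<le> action U T1 g1 + action U T2 g2"
      using barrier_le_action[OF concat(1)] concat(2-4) adm1 adm2 by simp
    then show "barrier U x z - action U T2 g2 \<le> action U T1 g1" by simp
  qed
  then have "barrier U x z - barrier U x y \<le> barrier U y z"
    by (intro barrier_greatest) (simp add: algebra_simps)
  then show ?thesis by simp
qed

lemma barrier_superadditive:
  assumes "y \<in> closed_segment x z"
  shows "barrier U x y + barrier U y z \<le> barrier U x z"
proof (rule barrier_greatest)
  fix T \<gamma> assume adm: "admissible U T \<gamma>" and "\<gamma> 0 = x" "\<gamma> T = z"
  then have "0 \<le> T" and "continuous_on {0..T} \<gamma>"
    unfolding admissible_def by (auto intro: abs_cont_on_imp_continuous_on)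
  then obtain t0 where "t0 \<in> {0..T}" "\<gamma> t0 = y"
    using IVT'_closed_segment_real[of y \<gamma> 0 T] assms \<open>\<gamma> 0 = x\<close> \<open>\<gamma> T = z\<close>
    by (auto simp: closed_segment_eq_real_ivl)
  then have "0 \<le> t0" "t0 \<le> T" by auto
  note parts = admissible_split[OF adm this]
  have "barrier U x y \<le> action U t0 \<gamma>"
    by (rule barrier_le_action[OF parts(1) \<open>\<gamma> 0 = x\<close> \<open>\<gamma> t0 = y\<close>])
  moreover have "barrier U y z \<le> action U (T - t0) (\<lambda>t. \<gamma> (t0 + t))"
    by (rule barrier_le_action[OF parts(2)]) (use \<open>\<gamma> t0 = y\<close> \<open>\<gamma> T = z\<close> in simp_all)
  ultimately show "barrier U x y + barrier U y z \<le> action U T \<gamma>"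
    using parts(3) by linarith
qed

lemma barrier_additive:
  "y \<in> closed_segment x z \<Longrightarrow> barrier U x z = barrier U x y + barrier U y z"
  by (rule antisym[OF barrier_triangle barrier_superadditive])

lemma barrier_translate_le:
  assumes "\<And>x. deriv U (x + c) = deriv U x"
  shows "barrier U (x + c) (y + c) \<le> barrier U x y"
proof (rule barrier_greatest)
  fix T \<gamma> assume "admissible U T \<gamma>" "\<gamma> 0 = x" "\<gamma> T = y"
  then show "barrier U (x + c) (y + c) \<le> action U T \<gamma>"
    using barrier_le_action[of U T "\<lambda>t. \<gamma> t + c"] admissible_add_const[OF assms] by simp
qed

lemma barrier_translate:
  assumes "\<And>x. deriv U (x + c) = deriv U x"
  shows "barrier U (x + c) (y + c) = barrier U x y"
proof (rule antisym[OF barrier_translate_le[OF assms]])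
  have "\<And>x. deriv U (x + - c) = deriv U x"
    using assms[of "_ - c"] by simp
  from barrier_translate_le[OF this, of "x + c" "y + c"]
  show "barrier U x y \<le> barrier U (x + c) (y + c)" by simp
qed

lemma peierls_le_zero_if_critical:
  assumes "deriv U p = 0"
  shows "peierls U p p \<le> 0"
  unfolding peierls_def
proof (rule Liminf_le)
  show "\<forall>\<^sub>F T in at_top. ereal (Inf {action U T \<gamma> | \<gamma>. admissible U T \<gamma> \<and> \<gamma> 0 = p \<and>
      (\<exists>m::int. \<gamma> T = p + of_int m)}) \<le> 0"
    using eventually_ge_at_top[of 0]
  proof eventually_elim
    case (elim T)
    have "admissible U T (\<lambda>t. p + 0 * t)" using elim by (rule admissible_linear)
    moreover have "action U T (\<lambda>t. p + 0 * t) = 0"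
      unfolding action_linear by (simp add: lagr_def assms)
    ultimately have "Inf {action U T \<gamma> | \<gamma>. admissible U T \<gamma> \<and> \<gamma> 0 = p \<and>
        (\<exists>m::int. \<gamma> T = p + of_int m)} \<le> 0"
      by (intro cInf_lower2[of 0]) (force, simp, auto intro!: bdd_belowI[of _ 0] action_nonneg)
    then show ?case by simp
  qed
qed simp

lemma peierls_ge_if_barrier_ge:
  assumes "\<And>m::int. c \<le> barrier U x (y + of_int m)"
  shows "ereal c \<le> peierls U x y"
  unfolding peierls_def
proof (rule Liminf_bounded)
  show "\<forall>\<^sub>F T in at_top. ereal c \<le> ereal (Inf {action U T \<gamma> | \<gamma>. admissible U T \<gamma> \<and> \<gamma> 0 = x \<and>
      (\<exists>m::int. \<gamma> T = y + of_int m)})"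
    using eventually_gt_at_top[of 0]
  proof eventually_elim
    case (elim T)
    have "admissible U T (\<lambda>t. x + (y - x) / T * t)" using elim by (intro admissible_linear) simp
    moreover have "x + (y - x) / T * T = y + of_int 0" using elim by simp
    ultimately have "{action U T \<gamma> | \<gamma>. admissible U T \<gamma> \<and> \<gamma> 0 = x \<and>
        (\<exists>m::int. \<gamma> T = y + of_int m)} \<noteq> {}"
      by fastforce
    then have "c \<le> Inf {action U T \<gamma> | \<gamma>. admissible U T \<gamma> \<and> \<gamma> 0 = x \<and>
        (\<exists>m::int. \<gamma> T = y + of_int m)}"
      by (rule cInf_greatest) (use assms barrier_le_action order_trans in blast)
    then show ?case by simp
  qed
qed

end

locale periodic_chain_cost =
  fixes B :: "int \<Rightarrow> int \<Rightarrow> real" and k :: int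
  assumes period_pos: "1 \<le> k"
    and additive: "min a c \<le> b \<Longrightarrow> b \<le> max a c \<Longrightarrow> B a c = B a b + B b c"
    and nonneg: "0 \<le> B a c"
    and periodic: "B (a + t * k) (c + t * k) = B a c"
begin

(* cut_cost i d is the term of W_i in which x_i is reached from x_d leftwards and its copy
   x_(i+k) from x_(d+1) rightwards; min_cut_cost_eq identifies min_cut_cost with Wval. *)
definition cut_cost :: "int \<Rightarrow> int \<Rightarrow> real" where
  "cut_cost i d = B d i + B (d + 1) (i + k)"

definition min_cut_cost :: "int \<Rightarrow> real" where
  "min_cut_cost i = Min (cut_cost i ` {i..i + k - 1})"

lemma cost_self: "B a a = 0"
  using additive[of a a a] by simp

lemma cost_mono: "min j i \<le> i' \<Longrightarrow> i' \<le> max j i \<Longrightarrow> B j i' \<le> B j i"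
  using additive[of j i i'] nonneg[of i' i] by simp

lemma cut_cost_periodic: "cut_cost (i + t * k) (d + t * k) = cut_cost i d"
  using periodic[of d t i] periodic[of "d + 1" t "i + k"] by (simp add: cut_cost_def algebra_simps)

lemma min_cut_cost_periodic: "min_cut_cost (i + t * k) = min_cut_cost i"
proof -
  have window: "{i + t * k..i + t * k + k - 1} = (\<lambda>d. d + t * k) ` {i..i + k - 1}"
    by (simp add: algebra_simps)
  show ?thesis
    unfolding min_cut_cost_def window image_image cut_cost_periodic ..
qed

lemma min_cut_cost_le: "d \<in> {i..i + k - 1} \<Longrightarrow> min_cut_cost i \<le> cut_cost i d"
  unfolding min_cut_cost_def by (rule Min_le) auto

lemma min_cut_cost_attained: "\<exists>d\<in>{i..i + k - 1}. min_cut_cost i = cut_cost i d"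
proof -
  have "min_cut_cost i \<in> cut_cost i ` {i..i + k - 1}"
    unfolding min_cut_cost_def using period_pos by (intro Min_in) auto
  then show ?thesis by auto
qed

lemma min_cut_cost_le_right:
  assumes "j \<le> i" "i < j + k"
  shows "min_cut_cost i \<le> min_cut_cost j + B j i"
proof -
  obtain d where d: "j \<le> d" "d \<le> j + k - 1" and min_j: "min_cut_cost j = cut_cost j d"
    using min_cut_cost_attained[of j] by auto
  have shift: "B (j + k) (i + k) = B j i"
    using periodic[of j 1 i] by simp
  show ?thesis
  proof (cases "i \<le> d")
    case True
    have "B d j = B d i + B i j" "B (d + 1) (i + k) = B (d + 1) (j + k) + B (j + k) (i + k)"
      using True d assms by (auto intro!: additive)
    then have "cut_cost i d \<le> cut_cost j d + B j i"
      using nonneg[of i j] shift by (simp add: cut_cost_def)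
    moreover have "min_cut_cost i \<le> cut_cost i d"
      using True d assms by (intro min_cut_cost_le) auto
    ultimately show ?thesis using min_j by simp
  next
    case False
    have "B (d + 1) (j + k) = B (d + 1) (i + 1) + B (i + 1) (j + k)"
      "B (i + 1) (i + k) = B (i + 1) (j + k) + B (j + k) (i + k)"
      using False d assms by (auto intro!: additive)
    then have "cut_cost i i \<le> cut_cost j d + B j i"
      using nonneg[of d j] nonneg[of "d + 1" "i + 1"] shift cost_self
      by (simp add: cut_cost_def)
    moreover have "min_cut_cost i \<le> cut_cost i i"
      using period_pos by (intro min_cut_cost_le) auto
    ultimately show ?thesis using min_j by simp
  qed
qed

lemma min_cut_cost_le_left:
  assumes "i < j" "j < i + k"
  shows "min_cut_cost i \<le> min_cut_cost j + B j i"
proof -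
  obtain d where d: "j \<le> d" "d \<le> j + k - 1" and min_j: "min_cut_cost j = cut_cost j d"
    using min_cut_cost_attained[of j] by auto
  show ?thesis
  proof (cases "d < i + k")
    case True
    have "B d i = B d j + B j i" "B (d + 1) (j + k) = B (d + 1) (i + k) + B (i + k) (j + k)"
      using True d assms by (auto intro!: additive)
    then have "cut_cost i d \<le> cut_cost j d + B j i"
      using nonneg[of "i + k" "j + k"] by (simp add: cut_cost_def)
    moreover have "min_cut_cost i \<le> cut_cost i d"
      using True d assms by (intro min_cut_cost_le) auto
    ultimately show ?thesis using min_j by simp
  next
    case False
    have "B (i + k - 1) i = B (i + k - 1) j + B j i" "B d j = B d (i + k - 1) + B (i + k - 1) j"
      using False d assms by (auto intro!: additive)
    then have "cut_cost i (i + k - 1) \<le> cut_cost j d + B j i"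
      using nonneg[of d "i + k - 1"] nonneg[of "d + 1" "j + k"] cost_self[of "i + k"]
      by (simp add: cut_cost_def)
    moreover have "min_cut_cost i \<le> cut_cost i (i + k - 1)"
      using period_pos by (intro min_cut_cost_le) auto
    ultimately show ?thesis using min_j by simp
  qed
qed

lemma min_cut_cost_subsolution: "min_cut_cost i \<le> min_cut_cost j + B j i"
proof -
  obtain t where near: "\<bar>i + t * k - j\<bar> < k"
    and between: "min j i \<le> i + t * k" "i + t * k \<le> max j i"
  proof (cases "j \<le> i")
    case True
    define q where "q = (i - j) div k"
    have "i - q * k = j + (i - j) mod k"
      by (simp add: q_def algebra_simps minus_div_mult_eq_mod)
    moreover have "0 \<le> (i - j) mod k" "(i - j) mod k < k" "0 \<le> q * k"
      using True period_pos by (simp_all add: q_def pos_imp_zdiv_nonneg_iff)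
    ultimately show ?thesis
      using True by (intro that[of "- q"]) auto
  next
    case False
    define q where "q = (j - i) div k"
    have "i + q * k = j - (j - i) mod k"
      by (simp add: q_def algebra_simps minus_div_mult_eq_mod)
    moreover have "0 \<le> (j - i) mod k" "(j - i) mod k < k" "0 \<le> q * k"
      using False period_pos by (simp_all add: q_def pos_imp_zdiv_nonneg_iff)
    ultimately show ?thesis
      using False by (intro that[of q]) auto
  qed
  have "min_cut_cost i = min_cut_cost (i + t * k)"
    by (rule min_cut_cost_periodic[symmetric])
  also have "\<dots> \<le> min_cut_cost j + B j (i + t * k)"
    using near min_cut_cost_le_right min_cut_cost_le_left by (cases "j \<le> i + t * k") auto
  also have "\<dots> \<le> min_cut_cost j + B j i"
    using cost_mono[OF between] by simp
  finally show ?thesis .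
qed

lemma min_cut_cost_eq:
  assumes "i \<in> {1..k}"
  shows "Min ((\<lambda>c. (if c < i then B (c + 1) i else B (c + 1) (i + k))
      + (if i \<le> c then B c i else B c (i - k))) ` {1..k}) = min_cut_cost i"
proof -
  have summand: "(if c < i then B (c + 1) i else B (c + 1) (i + k)) + (if i \<le> c then B c i else B c (i - k))
      = cut_cost i (if i \<le> c then c else c + k)" for c
    using periodic[of "c + 1" 1 i] periodic[of c 1 "i - k"] by (simp add: cut_cost_def algebra_simps)
  have window: "(\<lambda>c. if i \<le> c then c else c + k) ` {1..k} = {i..i + k - 1}"
  proof
    show "(\<lambda>c. if i \<le> c then c else c + k) ` {1..k} \<subseteq> {i..i + k - 1}"
      using assms by auto
    show "{i..i + k - 1} \<subseteq> (\<lambda>c. if i \<le> c then c else c + k) ` {1..k}"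
    proof
      fix d assume "d \<in> {i..i + k - 1}"
      then show "d \<in> (\<lambda>c. if i \<le> c then c else c + k) ` {1..k}"
        using assms by (intro image_eqI[of _ _ "if d \<le> k then d else d - k"]) auto
    qed
  qed
  show ?thesis
    unfolding min_cut_cost_def window[symmetric] image_image summand ..
qed

end

lemma mono_intI:
  fixes f :: "int \<Rightarrow> 'a::order"
  assumes "\<And>i. f i \<le> f (i + 1)"
  shows "mono f"
proof (rule monoI)
  fix a c :: int assume "a \<le> c"
  then show "f a \<le> f c"
    by (induction c rule: int_ge_induct) (auto intro: order_trans assms)
qed

lemma mono_in_closed_segment:
  fixes f :: "int \<Rightarrow> real"
  assumes "mono f" "min a c \<le> b" "b \<le> max a c"
  shows "f b \<in> closed_segment (f a) (f c)"
  using assms monoD[OF \<open>mono f\<close>, of a b] monoD[OF \<open>mono f\<close>, of b c]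
    monoD[OF \<open>mono f\<close>, of c b] monoD[OF \<open>mono f\<close>, of b a]
  by (cases "a \<le> c") (auto simp: closed_segment_eq_real_ivl)

lemma interleaved_minima_mono:
  fixes xm xM :: "int \<Rightarrow> real" and k :: int
  assumes "1 \<le> k" "xM 0 = 0" "xM k = 1"
    and order: "\<forall>i\<in>{1..k}. xM (i - 1) < xm i \<and> xm i < xM i"
    and per_m: "\<forall>i l. xm (i + l * k) = xm i + of_int l"
  shows "mono xm"
proof (rule mono_intI)
  have step: "xm r \<le> xm (r + 1)" if "r \<in> {1..k}" for r
  proof (cases "r = k")
    case True
    have "xm k < xM k" "xM 0 < xm 1"
      using order[rule_format, of k] order[rule_format, of 1] \<open>1 \<le> k\<close> by auto
    moreover have "xm (1 + k) = xm 1 + 1"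
      using per_m[rule_format, of 1 1] by simp
    ultimately show ?thesis using True \<open>xM 0 = 0\<close> \<open>xM k = 1\<close> by (simp add: add.commute)
  next
    case False
    then have "xm r < xM r" "xM r < xm (r + 1)"
      using order[rule_format, of r] order[rule_format, of "r + 1"] that by auto
    then show ?thesis by simp
  qed
  fix i :: int
  define r where "r = (i - 1) mod k + 1"
  define l where "l = (i - 1) div k"
  have i: "i = r + l * k"
    unfolding r_def l_def by (simp add: algebra_simps)
  have "0 \<le> (i - 1) mod k" "(i - 1) mod k < k"
    using \<open>1 \<le> k\<close> by simp_all
  then have "r \<in> {1..k}"
    unfolding r_def by simp
  have "xm (i + 1) = xm ((r + 1) + l * k)"
    using i by (simp add: algebra_simps)
  also have "\<dots> = xm (r + 1) + l"
    by (rule per_m[rule_format])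
  finally show "xm i \<le> xm (i + 1)"
    using step[OF \<open>r \<in> {1..k}\<close>] per_m[rule_format, of r l] i by simp
qed

lemma deriv_skew_periodic:
  fixes Ut U :: "real \<Rightarrow> real"
  assumes smooth: "smooth_real Ut" and per: "\<And>x. Ut (x + 1) = Ut x"
    and skew: "\<And>x. U x = Ut x - b * x"
  shows "continuous_on UNIV (deriv U)" and "deriv U (x + of_int m) = deriv U x"
proof -
  have "Ut differentiable at x" and deriv_differentiable: "deriv Ut differentiable at x" for x
    using smooth[unfolded smooth_real_def, rule_format, of 0 x]
      smooth[unfolded smooth_real_def, rule_format, of 1 x] by simp_all
  then have "(Ut has_real_derivative deriv Ut x) (at x)" for x
    by (simp add: DERIV_deriv_iff_real_differentiable)
  then have "((\<lambda>x. Ut x - b * x) has_real_derivative deriv Ut x - b) (at x)" for x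
    by (auto intro!: derivative_eq_intros)
  then have deriv_U: "deriv U = (\<lambda>x. deriv Ut x - b)"
    unfolding skew[abs_def] by (intro ext DERIV_imp_deriv)
  show "continuous_on UNIV (deriv U)"
    unfolding deriv_U using deriv_differentiable
    by (intro continuous_intros differentiable_imp_continuous_on) (auto simp: differentiable_on_def)
  interpret periodic_fun_simple' Ut by standard (rule per)
  have "deriv Ut (of_int m + x) = deriv Ut x"
    using deriv_shift[of Ut "of_int m" x] by (simp add: add.commute plus_of_int)
  then show "deriv U (x + of_int m) = deriv U x"
    unfolding deriv_U by (simp add: add.commute)
qed

lemma Min_add_eq_self:
  fixes w :: "'a \<Rightarrow> real" and p :: "'a \<Rightarrow> ereal"
  assumes "finite A" "i \<in> A" "p i \<le> 0"
    and lower: "\<And>j. j \<in> A \<Longrightarrow> ereal (w i - w j) \<le> p j"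
  shows "ereal (w i) = Min ((\<lambda>j. ereal (w j) + p j) ` A)"
proof (rule Min_eqI[symmetric])
  have le: "ereal (w i) \<le> ereal (w j) + p j" if "j \<in> A" for j
  proof -
    have "ereal (w i) = ereal (w j) + ereal (w i - w j)" by simp
    also have "\<dots> \<le> ereal (w j) + p j" using lower[OF that] by (rule add_left_mono)
    finally show ?thesis .
  qed
  then show "\<And>y. y \<in> (\<lambda>j. ereal (w j) + p j) ` A \<Longrightarrow> ereal (w i) \<le> y" by blast
  have "ereal (w i) + p i \<le> ereal (w i) + 0"
    using \<open>p i \<le> 0\<close> by (rule add_left_mono)
  with le[OF \<open>i \<in> A\<close>] have "ereal (w i) = ereal (w i) + p i"
    by (intro antisym) simp_all
  then show "ereal (w i) \<in> (\<lambda>j. ereal (w j) + p j) ` A"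
    using \<open>i \<in> A\<close> by (rule image_eqI)
qed (use \<open>finite A\<close> in simp)

theorem lemma3p3:
  fixes U Ut :: "real \<Rightarrow> real" and b :: real and k :: int
    and xm xM :: "int \<Rightarrow> real"
  assumes smooth: "smooth_real Ut"
    and per: "\<forall>x. Ut (x + 1) = Ut x"
    and skew: "\<forall>x. U x = Ut x - b * x"
    and k: "1 \<le> k"
    and xM0: "xM 0 = 0" and xMk: "xM k = 1"
    and order: "\<forall>i\<in>{1..k}. xM (i - 1) < xm i \<and> xm i < xM i"
    and per_m: "\<forall>i l. xm (i + l * k) = xm i + of_int l"
    and per_M: "\<forall>i l. xM (i + l * k) = xM i + of_int l"
    and crit: "{x \<in> {0..1}. deriv U x = 0} = xm ` {1..k} \<union> xM ` {0..k}"
    and locmin: "\<forall>i\<in>{1..k}. \<exists>e>0. \<forall>y. \<bar>y - xm i\<bar> < e \<longrightarrow> U (xm i) \<le> U y"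
    and locmax: "\<forall>i\<in>{0..k}. \<exists>e>0. \<forall>y. \<bar>y - xM i\<bar> < e \<longrightarrow> U y \<le> U (xM i)"
  shows "\<forall>i\<in>{1..k}. ereal (Wval U xm k i)
           = Min ((\<lambda>j. ereal (Wval U xm k j) + peierls U (xm j) (xm i)) ` {1..k})"
proof
  fix i assume i: "i \<in> {1..k}"
  note cont = deriv_skew_periodic(1)[OF smooth per[rule_format] skew[rule_format]]
  note period = deriv_skew_periodic(2)[OF smooth per[rule_format] skew[rule_format]]
  have "mono xm" by (rule interleaved_minima_mono[OF k xM0 xMk order per_m])
  interpret periodic_chain_cost "\<lambda>a c. barrier U (xm a) (xm c)" k
  proof
    show "barrier U (xm a) (xm c) = barrier U (xm a) (xm b) + barrier U (xm b) (xm c)"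
      if "min a c \<le> b" "b \<le> max a c" for a b c
      using barrier_additive[OF cont mono_in_closed_segment[OF \<open>mono xm\<close> that]] .
    show "barrier U (xm (a + t * k)) (xm (c + t * k)) = barrier U (xm a) (xm c)" for a c t
      using barrier_translate[OF cont period] per_m by simp
  qed (use k barrier_nonneg[OF cont] in auto)
  have W: "Wval U xm k j = min_cut_cost j" if "j \<in> {1..k}" for j
    using min_cut_cost_eq[OF that] unfolding Wval_def tilde_hR_def tilde_hL_def .
  show "ereal (Wval U xm k i) = Min ((\<lambda>j. ereal (Wval U xm k j) + peierls U (xm j) (xm i)) ` {1..k})"
  proof (rule Min_add_eq_self)
    fix j assume j: "j \<in> {1..k}"
    show "ereal (Wval U xm k i - Wval U xm k j) \<le> peierls U (xm j) (xm i)"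
    proof (rule peierls_ge_if_barrier_ge[OF cont])
      fix m :: int
      show "Wval U xm k i - Wval U xm k j \<le> barrier U (xm j) (xm i + of_int m)"
        using min_cut_cost_subsolution[of "i + m * k" j] W[OF i] W[OF j] per_m
        by (simp add: min_cut_cost_periodic)
    qed
  next
    have "deriv U (xm i) = 0" using crit i by blast
    then show "peierls U (xm i) (xm i) \<le> 0" by (rule peierls_le_zero_if_critical[OF cont])
  qed (use i in auto)
qed

end
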